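(* Let $A\in H_n$ and $B\in H_m$ have eigenvalues $a_1,\dots,a_n$ and $b_1,\dots,b_m$, respectively, and set $\mathbf a=(a_1,\dots,a_n)$, $\mathbf b=(b_1,\dots,b_m)$. The following are equivalent: (a) there is a trace preserving completely positive map $\Phi:M_n\to M_m$ with $\Phi(A)=B$; (b) there is an $n\times m$ row stochastic matrix $D$ with $\mathbf b=\mathbf aD$; (c) $\mathrm{tr}\,A=\mathrm{tr}\,B$ and $\sum_{p=1}^n|a_p|\ge\sum_{q=1}^m|b_q|$. Moreover, when (b) holds, $D$ can be chosen so that its $p$-th and $q$-th rows are identical whenever $a_pa_q>0$, and for every $p$ with $a_p=0$ the $p$-th row of $D$ may be replaced by an arbitrary nonnegative vector with entries summing to 1 while keeping $\mathbf b=\mathbf aD$. Also, condition (c) is equivalent to: $\mathrm{tr}\,A=\mathrm{tr}\,B$ and the sum of the positive eigenvalues of $A$ is at least the sum of the positive eigenvalues of $B$ (equivalently, the sum of the negative eigenvalues of $A$ is at most the sum of the negative eigenvalues of $B$).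
   Context: $H_n$ is the set of $n\times n$ Hermitian matrices. A linear map $\Phi:M_n\to M_m$ is completely positive if all maps $I_k\otimes\Phi$ preserve positive semidefiniteness, and trace preserving if $\mathrm{tr}\,\Phi(X)=\mathrm{tr}\,X$ for all $X$. A row stochastic matrix is a nonnegative matrix each of whose rows sums to 1. *)

theory Defs
  imports "Jordan_Normal_Form.Char_Poly"
begin

definition mtrace :: "complex mat \<Rightarrow> complex" where
  "mtrace A = (\<Sum>i<dim_row A. A $$ (i,i))"

definition hermitian_mat :: "nat \<Rightarrow> complex mat \<Rightarrow> bool" where
  "hermitian_mat n A \<longleftrightarrow> A \<in> carrier_mat n n \<and>
     (\<forall>i<n. \<forall>j<n. A $$ (j,i) = cnj (A $$ (i,j)))"

definition psd_mat :: "complex mat \<Rightarrow> bool" where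
  "psd_mat A \<longleftrightarrow> hermitian_mat (dim_row A) A \<and>
     (\<forall>x \<in> carrier_vec (dim_row A).
        0 \<le> Re (\<Sum>i<dim_row A. \<Sum>j<dim_row A. cnj (x $ i) * A $$ (i,j) * x $ j))"

definition has_eigenvalues :: "complex mat \<Rightarrow> real list \<Rightarrow> bool" where
  "has_eigenvalues A a \<longleftrightarrow>
     char_poly A = (\<Prod>x\<leftarrow>a. [:- complex_of_real x, 1:])"

definition linear_map_mat :: "nat \<Rightarrow> nat \<Rightarrow> (complex mat \<Rightarrow> complex mat) \<Rightarrow> bool" where
  "linear_map_mat n m \<Phi> \<longleftrightarrow>
     (\<forall>X \<in> carrier_mat n n. \<Phi> X \<in> carrier_mat m m) \<and>
     (\<forall>X \<in> carrier_mat n n. \<forall>Y \<in> carrier_mat n n. \<Phi> (X + Y) = \<Phi> X + \<Phi> Y) \<and>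
     (\<forall>c. \<forall>X \<in> carrier_mat n n. \<Phi> (c \<cdot>\<^sub>m X) = c \<cdot>\<^sub>m \<Phi> X)"

text \<open>The map I_k \<otimes> \<Phi> : M_k(M_n) \<rightarrow> M_k(M_m), applying \<Phi> to each n x n block.\<close>
definition ampl :: "nat \<Rightarrow> nat \<Rightarrow> nat \<Rightarrow> (complex mat \<Rightarrow> complex mat) \<Rightarrow> complex mat \<Rightarrow> complex mat" where
  "ampl k n m \<Phi> X = mat (k * m) (k * m) (\<lambda>(i,j).
      \<Phi> (mat n n (\<lambda>(r,s). X $$ ((i div m) * n + r, (j div m) * n + s))) $$ (i mod m, j mod m))"

definition completely_positive :: "nat \<Rightarrow> nat \<Rightarrow> (complex mat \<Rightarrow> complex mat) \<Rightarrow> bool" where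
  "completely_positive n m \<Phi> \<longleftrightarrow>
     (\<forall>k. \<forall>X \<in> carrier_mat (k * n) (k * n). psd_mat X \<longrightarrow> psd_mat (ampl k n m \<Phi> X))"

definition trace_preserving :: "nat \<Rightarrow> (complex mat \<Rightarrow> complex mat) \<Rightarrow> bool" where
  "trace_preserving n \<Phi> \<longleftrightarrow> (\<forall>X \<in> carrier_mat n n. mtrace (\<Phi> X) = mtrace X)"

definition row_stochastic :: "nat \<Rightarrow> nat \<Rightarrow> real mat \<Rightarrow> bool" where
  "row_stochastic n m D \<longleftrightarrow> D \<in> carrier_mat n m \<and>
     (\<forall>i<n. \<forall>j<m. 0 \<le> D $$ (i,j)) \<and> (\<forall>i<n. (\<Sum>j<m. D $$ (i,j)) = 1)"

definition vec_mat_eq :: "real list \<Rightarrow> real list \<Rightarrow> real mat \<Rightarrow> bool" where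
  "vec_mat_eq b a D \<longleftrightarrow>
     (\<forall>q<length b. b ! q = (\<Sum>p<length a. a ! p * D $$ (p,q)))"

end

(*
  Both matrices are unitarily diagonalized, A = sum_p a_p u_p u_p^H and
  B = sum_q b_q v_q v_q^H, where ^H is the conjugate transpose (spectral theorem, derived from
  a unitary Schur triangularization).
  (a) => (b): D_pq = v_q^H Phi(u_p u_p^H) v_q is nonnegative by complete positivity, its rows sum
  to 1 by trace preservation, and b = a D by linearity.
  (b) => (a): Phi(X) = sum_pq D_pq (u_p^H X u_p) v_q v_q^H is linear, trace preserving, maps A to
  B, and completely positive since (I_k (x) Phi)(X) is a nonnegative combination of congruences of X.
  (b) => (c): D preserves the sum and does not increase the absolute sum.
  (c) => (b): an explicit D whose p-th row depends only on the sign of a_p.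
*)
theory Submission
  imports Defs "Jordan_Normal_Form.Schur_Decomposition"
begin

lemma sum_swap3:
  "(\<Sum>t\<in>A. \<Sum>s\<in>B. \<Sum>k\<in>C. f t s k) = (\<Sum>k\<in>C. \<Sum>t\<in>A. \<Sum>s\<in>B. f t s k)"
proof -
  have "(\<Sum>t\<in>A. \<Sum>s\<in>B. \<Sum>k\<in>C. f t s k) = (\<Sum>t\<in>A. \<Sum>k\<in>C. \<Sum>s\<in>B. f t s k)"
    by (rule sum.cong[OF refl], rule sum.swap)
  also have "\<dots> = (\<Sum>k\<in>C. \<Sum>t\<in>A. \<Sum>s\<in>B. f t s k)" by (rule sum.swap)
  finally show ?thesis .
qed

lemma sum_swap4:
  "(\<Sum>a\<in>A. \<Sum>b\<in>B. \<Sum>c\<in>C. \<Sum>d\<in>E. f a b c d) = (\<Sum>c\<in>C. \<Sum>d\<in>E. \<Sum>a\<in>A. \<Sum>b\<in>B. f a b c d)"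
proof -
  have "(\<Sum>a\<in>A. \<Sum>b\<in>B. \<Sum>c\<in>C. \<Sum>d\<in>E. f a b c d) = (\<Sum>a\<in>A. \<Sum>c\<in>C. \<Sum>d\<in>E. \<Sum>b\<in>B. f a b c d)"
    by (rule sum.cong[OF refl], rule sum_swap3[symmetric])
  also have "\<dots> = (\<Sum>c\<in>C. \<Sum>d\<in>E. \<Sum>a\<in>A. \<Sum>b\<in>B. f a b c d)" by (rule sum_swap3[symmetric])
  finally show ?thesis .
qed

lemma sum_delta_mult:
  fixes r m :: nat
  shows "r < m \<Longrightarrow> (\<Sum>s<m. f s * (if s = r then 1 else 0)) = (f r :: 'a :: semiring_1)"
  by (subst sum.cong[OF refl, of _ _ "\<lambda>s. if s = r then f r else 0"]) (auto simp: sum.delta)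

lemma scaled_sum_product:
  fixes c :: "'a :: comm_semiring_1"
  shows "c * ((\<Sum>t\<in>A. f t) * (\<Sum>s\<in>B. g s)) = (\<Sum>t\<in>A. \<Sum>s\<in>B. c * (f t * g s))"
  unfolding sum_product by (simp only: sum_distrib_left)

lemma sum_blocks:
  fixes k m :: nat
  shows "(\<Sum>i<k*m. F i) = (\<Sum>I<k. \<Sum>r<m. F (I*m + r))"
proof -
  have "(\<Sum>i<k*m. F i) = (\<Sum>I<k. sum F {I*m..<I*m+m})" using sum.nat_group[of F m k] by simp
  also have "\<dots> = (\<Sum>I<k. \<Sum>r<m. F (I*m + r))"
  proof (rule sum.cong[OF refl])
    fix I
    have "sum F {I*m..<I*m+m} = (\<Sum>r\<in>{0..<m}. F (r + I*m))"
      using sum.shift_bounds_nat_ivl[of F 0 "I*m" m] by (simp add: add.commute)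
    then show "sum F {I*m..<I*m+m} = (\<Sum>r<m. F (I*m + r))"
      by (simp add: lessThan_atLeast0 add.commute)
  qed
  finally show ?thesis .
qed

lemma block_index_less:
  fixes I k t n :: nat
  assumes "I < k" "t < n" shows "I*n + t < k*n"
proof -
  have "Suc I * n \<le> k * n" using assms by (intro mult_le_mono1) simp
  then show ?thesis using assms by simp
qed

lemma sum_list_as_sum:
  "sum_list xs = (\<Sum>p<length xs. xs ! p)"
  "sum_list (map f xs) = (\<Sum>p<length xs. f (xs ! p))"
  by (simp_all add: sum_list_sum_nth lessThan_atLeast0)

lemma mult_mat_entry:
  assumes "A \<in> carrier_mat n k" "B \<in> carrier_mat k m" "i < n" "j < m"
  shows "(A * B) $$ (i,j) = (\<Sum>l<k. A $$ (i,l) * B $$ (l,j))"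
  using assms by (auto simp: scalar_prod_def lessThan_atLeast0 intro!: sum.cong)

section \<open>The adjoint and unitary matrices\<close>

lemma mat_adjoint_dim [simp]:
  "dim_row (mat_adjoint A) = dim_col A" "dim_col (mat_adjoint A) = dim_row A"
  unfolding mat_adjoint_def by auto

lemma mat_adjoint_index [simp]:
  "i < dim_col A \<Longrightarrow> j < dim_row A \<Longrightarrow> mat_adjoint (A :: complex mat) $$ (i,j) = cnj (A $$ (j,i))"
  unfolding mat_adjoint_def by (simp add: mat_of_rows_index)

lemma mat_adjoint_carrier [simp]: "A \<in> carrier_mat n m \<Longrightarrow> mat_adjoint A \<in> carrier_mat m n"
  unfolding carrier_mat_def by auto

lemma mat_adjoint_adjoint [simp]: "mat_adjoint (mat_adjoint (A :: complex mat)) = A"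
  by (rule eq_matI) auto

lemma mat_adjoint_one [simp]: "mat_adjoint (1\<^sub>m n :: complex mat) = 1\<^sub>m n"
  by (rule eq_matI) auto

lemma mat_adjoint_mult:
  assumes "(A :: complex mat) \<in> carrier_mat n k" "B \<in> carrier_mat k m"
  shows "mat_adjoint (A * B) = mat_adjoint B * mat_adjoint A"
  by (rule eq_matI) (use assms in \<open>auto simp: scalar_prod_def sum_conjugate mult.commute intro!: sum.cong\<close>)

lemma mat_adjoint_one_block:
  assumes "(P :: complex mat) \<in> carrier_mat k k"
  shows "mat_adjoint (four_block_mat (1\<^sub>m 1) (0\<^sub>m 1 k) (0\<^sub>m k 1) P)
       = four_block_mat (1\<^sub>m 1) (0\<^sub>m 1 k) (0\<^sub>m k 1) (mat_adjoint P)"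
  by (rule eq_matI) (use assms in auto)

lemma hermitian_mat_adjoint:
  assumes "hermitian_mat n A" shows "mat_adjoint A = A"
proof -
  have A: "A \<in> carrier_mat n n" and h: "\<And>i j. i < n \<Longrightarrow> j < n \<Longrightarrow> A $$ (j,i) = cnj (A $$ (i,j))"
    using assms unfolding hermitian_mat_def by blast+
  show ?thesis
  proof (rule eq_matI)
    fix i j assume "i < dim_row A" "j < dim_col A"
    then have ij: "i < n" "j < n" using A by auto
    then show "mat_adjoint A $$ (i,j) = A $$ (i,j)" using A h[OF ij(2) ij(1)] by simp
  qed (use A in auto)
qed

definition normalize_vec :: "complex vec \<Rightarrow> complex vec" where
  "normalize_vec w = complex_of_real (1 / sqrt (Re (w \<bullet>c w))) \<cdot>\<^sub>v w"

lemma normalize_vec_carrier [simp]: "w \<in> carrier_vec n \<Longrightarrow> normalize_vec w \<in> carrier_vec n"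
  unfolding normalize_vec_def by auto

lemma cscalar_prod_smult:
  assumes "x \<in> carrier_vec n" "y \<in> carrier_vec n"
  shows "(c \<cdot>\<^sub>v x) \<bullet>c (d \<cdot>\<^sub>v (y :: complex vec)) = c * cnj d * (x \<bullet>c y)"
  using assms by (auto simp: scalar_prod_def sum_distrib_left mult_ac intro!: sum.cong)

lemma normalize_vec_orthonormal:
  assumes ws: "set ws \<subseteq> carrier_vec n" "corthogonal ws"
    and i: "i < length ws" and j: "j < length ws"
  shows "normalize_vec (ws ! i) \<bullet>c normalize_vec (ws ! j) = (if i = j then 1 else 0)"
proof (cases "i = j")
  case True
  have wi: "ws ! i \<in> carrier_vec n" using ws i by auto
  have "ws ! i \<noteq> 0\<^sub>v n" using corthogonalD[OF ws(2) i i] wi by auto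
  then have pos: "ws ! i \<bullet>c ws ! i > 0" using conjugate_square_greater_0_vec wi by blast
  define r where "r = Re (ws ! i \<bullet>c ws ! i)"
  have r: "r > 0" "ws ! i \<bullet>c ws ! i = complex_of_real r"
    using pos by (auto simp: r_def less_complex_def complex_eq_iff)
  have nv: "normalize_vec (ws ! i) = complex_of_real (1 / sqrt r) \<cdot>\<^sub>v ws ! i"
    unfolding normalize_vec_def r_def ..
  have "normalize_vec (ws ! i) \<bullet>c normalize_vec (ws ! i)
      = complex_of_real (1 / sqrt r) * cnj (complex_of_real (1 / sqrt r)) * complex_of_real r"
    unfolding nv cscalar_prod_smult[OF wi wi] r(2) ..
  also have "\<dots> = complex_of_real ((1 / sqrt r) * (1 / sqrt r) * r)"
    by (simp only: complex_cnj_complex_of_real of_real_mult)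
  also have "(1 / sqrt r) * (1 / sqrt r) * r = 1" using r by (simp add: divide_simps)
  finally show ?thesis using True by simp
next
  case False
  have wi: "ws ! i \<in> carrier_vec n" and wj: "ws ! j \<in> carrier_vec n" using ws i j by auto
  show ?thesis
    unfolding normalize_vec_def cscalar_prod_smult[OF wi wj] using corthogonalD[OF ws(2) i j] False by simp
qed

(* Every nonzero vector, normalized, is the first column of a unitary matrix: complete it to a
   basis, apply Gram-Schmidt and normalize. *)
lemma unitary_completion:
  fixes v :: "complex vec"
  assumes v: "v \<in> carrier_vec n" and v0: "v \<noteq> 0\<^sub>v n"
  shows "\<exists>W \<in> carrier_mat n n. mat_adjoint W * W = 1\<^sub>m n \<and> col W 0 = normalize_vec v"
proof -
  interpret cof_vec_space n "TYPE(complex)" .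
  define b where "b = basis_completion v"
  from basis_completion[OF v v0, folded b_def]
  have dist_b: "distinct b" and indep: "\<not> lin_dep (set b)" and b: "set b \<subseteq> carrier_vec n"
    and hd_b: "hd b = v" and len_b: "length b = n" by auto
  have n: "n \<noteq> 0" using v v0 by (auto intro: eq_vecI)
  from hd_b len_b n obtain vs where bv: "b = v # vs" by (cases b) auto
  define ws where "ws = gram_schmidt n b"
  from gram_schmidt_result[OF b dist_b indep refl, folded ws_def]
  have ws: "set ws \<subseteq> carrier_vec n" "corthogonal ws" "length ws = n" by (auto simp: len_b)
  have hd_ws: "hd ws = v" using gram_schmidt_hd[OF v, of vs] unfolding ws_def bv .
  define us where "us = map normalize_vec ws"
  have us: "set us \<subseteq> carrier_vec n" "length us = n" using ws unfolding us_def by auto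
  have usi: "\<And>i. i < n \<Longrightarrow> us ! i \<in> carrier_vec n" using us by auto
  have orth: "\<And>i j. i < n \<Longrightarrow> j < n \<Longrightarrow> us ! i \<bullet>c us ! j = (if i = j then 1 else 0)"
    unfolding us_def using normalize_vec_orthonormal[OF ws(1,2)] ws(3) by auto
  define W where "W = mat_of_cols n us"
  have W: "W \<in> carrier_mat n n" unfolding W_def using us by auto
  have "mat_adjoint W * W = 1\<^sub>m n"
  proof (rule eq_matI)
    fix i j assume "i < dim_row (1\<^sub>m n :: complex mat)" "j < dim_col (1\<^sub>m n :: complex mat)"
    then have i: "i < n" and j: "j < n" by auto
    have "(mat_adjoint W * W) $$ (i,j) = (\<Sum>k<n. us ! j $ k * cnj (us ! i $ k))"
      using W i j usi[OF i] usi[OF j] unfolding W_def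
      by (auto simp: mult_mat_entry[of _ n n] mat_of_cols_index mult.commute intro!: sum.cong)
    also have "\<dots> = us ! j \<bullet>c us ! i"
      using usi[OF i] by (auto simp: scalar_prod_def lessThan_atLeast0)
    finally show "(mat_adjoint W * W) $$ (i,j) = 1\<^sub>m n $$ (i,j)" using orth[OF j i] i j by auto
  qed (use W in auto)
  moreover have "col W 0 = normalize_vec v"
    using n ws hd_ws unfolding W_def us_def by (cases ws) (auto simp: col_mat_of_cols)
  ultimately show ?thesis using W by blast
qed

(* For an eigenvalue e of A there is a unitary W such that the first column of W^H A W is e times
   the first unit vector (take a unit eigenvector as first column of W). *)
lemma unitary_eigenframe:
  fixes A :: "complex mat"
  assumes A: "A \<in> carrier_mat n n" and e: "eigenvalue A e"
  shows "\<exists>W \<in> carrier_mat n n. mat_adjoint W * W = 1\<^sub>m n \<and> W * mat_adjoint W = 1\<^sub>m n \<and> n \<noteq> 0 \<and>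
           col (mat_adjoint W * A * W) 0 = vec n (\<lambda>i. if i = 0 then e else 0)"
proof -
  define v where "v = find_eigenvector A e"
  have "eigenvector A v e" using find_eigenvector[OF A e] unfolding v_def .
  then have v: "v \<in> carrier_vec n" and v0: "v \<noteq> 0\<^sub>v n" and Av: "A *\<^sub>v v = e \<cdot>\<^sub>v v"
    using A unfolding eigenvector_def by auto
  have n: "n \<noteq> 0" using v v0 by (auto intro: eq_vecI)
  obtain W where W: "W \<in> carrier_mat n n" and WW: "mat_adjoint W * W = 1\<^sub>m n"
    and W0: "col W 0 = normalize_vec v" using unitary_completion[OF v v0] by blast
  have W': "mat_adjoint W \<in> carrier_mat n n" using W by simp
  have Aw0: "A *\<^sub>v col W 0 = e \<cdot>\<^sub>v col W 0"
    unfolding W0 normalize_vec_def using Av A v by (simp add: mult_mat_vec smult_smult_assoc mult.commute)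
  have "col (mat_adjoint W * A * W) 0 = vec n (\<lambda>i. if i = 0 then e else 0)"
  proof (rule eq_vecI)
    fix i assume "i < dim_vec (vec n (\<lambda>i. if i = 0 then e else 0))"
    then have i: "i < n" by simp
    have "col (mat_adjoint W * A * W) 0 $ i = row (mat_adjoint W) i \<bullet> (A *\<^sub>v col W 0)"
      using A W W' i n by (simp add: assoc_mult_mat[OF W' A W] mult_mat_vec_def)
    also have "\<dots> = e * (row (mat_adjoint W) i \<bullet> col W 0)"
      unfolding Aw0 using W W' i by (simp add: scalar_prod_smult_distrib[of _ n])
    also have "row (mat_adjoint W) i \<bullet> col W 0 = 1\<^sub>m n $$ (i,0)"
      using WW W W' i n by (metis carrier_matD index_mult_mat(1) neq0_conv)
    finally show "col (mat_adjoint W * A * W) 0 $ i = vec n (\<lambda>i. if i = 0 then e else 0) $ i"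
      using i n by simp
  qed (use A W in simp)
  with W WW n mat_mult_left_right_inverse[OF W' W WW] show ?thesis by blast
qed

lemma first_column_block:
  fixes A :: "'a :: comm_ring_1 mat"
  assumes A: "A \<in> carrier_mat n n" and n: "n \<noteq> 0"
    and col0: "col A 0 = vec n (\<lambda>i. if i = 0 then e else 0)"
  shows "\<exists>A2 A3. A2 \<in> carrier_mat 1 (n - 1) \<and> A3 \<in> carrier_mat (n - 1) (n - 1) \<and>
           A = four_block_mat (mat 1 1 (\<lambda>_. e)) A2 (0\<^sub>m (n - 1) 1) A3"
proof -
  have dims: "dim_row A = 1 + (n - 1)" "dim_col A = 1 + (n - 1)" using A n by auto
  obtain A1 A2 A0 A3 where split: "split_block A 1 1 = (A1, A2, A0, A3)"
    by (cases "split_block A 1 1") auto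
  from split_block[OF split dims] have "A2 \<in> carrier_mat 1 (n - 1)" "A3 \<in> carrier_mat (n - 1) (n - 1)"
    and A_block: "A = four_block_mat A1 A2 A0 A3" by auto
  moreover have "A1 = mat 1 1 (\<lambda>_. e)"
    using split[unfolded split_block_def Let_def] arg_cong[OF col0, of "\<lambda>v. v $ 0"] A n
    by (auto simp: col_def)
  moreover have "A0 = 0\<^sub>m (n - 1) 1"
  proof -
    have "A $$ (Suc i, 0) = 0" if "i < n - 1" for i
      using arg_cong[OF col0, of "\<lambda>v. v $ Suc i"] A that by auto
    then show ?thesis using split[unfolded split_block_def Let_def] A by auto
  qed
  ultimately show ?thesis by blast
qed

lemma unitary_triangularize_block:
  fixes A2 A3 :: "complex mat"
  assumes A2: "A2 \<in> carrier_mat 1 k" and A3: "A3 \<in> carrier_mat k k"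
    and sim: "similar_mat_wit A3 B P (mat_adjoint P)" and ut: "upper_triangular B"
  shows "\<exists>C Q. similar_mat_wit (four_block_mat (mat 1 1 (\<lambda>_. e)) A2 (0\<^sub>m k 1) A3) C Q (mat_adjoint Q) \<and>
           Q \<in> carrier_mat (Suc k) (Suc k) \<and> upper_triangular C \<and> diag_mat C = e # diag_mat B"
proof -
  from similar_mat_witD2[OF A3 sim]
  have B: "B \<in> carrier_mat k k" and P: "P \<in> carrier_mat k k" and PP': "P * mat_adjoint P = 1\<^sub>m k"
    by auto
  define Q where "Q = four_block_mat (1\<^sub>m 1) (0\<^sub>m 1 k) (0\<^sub>m k 1) P"
  define C where "C = four_block_mat (mat 1 1 (\<lambda>_. e)) (A2 * P) (0\<^sub>m k 1) B"
  have "similar_mat_wit (four_block_mat (mat 1 1 (\<lambda>_. e)) A2 (0\<^sub>m k 1) A3) C Q (mat_adjoint Q)"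
    unfolding C_def Q_def mat_adjoint_one_block[OF P]
    by (rule similar_mat_wit_four_block[OF similar_mat_wit_refl sim])
       (use A2 A3 P PP' in \<open>auto simp: assoc_mult_mat[OF A2 P mat_adjoint_carrier[OF P]]\<close>)
  moreover have "Q \<in> carrier_mat (Suc k) (Suc k)" unfolding Q_def using P
    by (auto simp del: four_block_carrier_mat intro!: four_block_carrier_mat[of _ 1 1 _ k k, simplified])
  moreover have "upper_triangular C"
    unfolding C_def by (rule upper_triangular_four_block[OF _ B _ ut]) auto
  moreover have "diag_mat C = e # diag_mat B"
    using diag_four_block_mat[of "mat 1 1 (\<lambda>_. e)" 1 B k] B unfolding C_def by (simp add: diag_mat_def)
  ultimately show ?thesis by blast
qed

(* The Schur decomposition of the Jordan_Normal_Form library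
   only provides a similarity by a matrix with orthogonal (not orthonormal) columns; here the
   columns are normalized, so that the inverse is the adjoint. *)
lemma unitary_schur:
  fixes A :: "complex mat"
  assumes "A \<in> carrier_mat n n" and "char_poly A = (\<Prod>e \<leftarrow> es. [:- e, 1:])"
  shows "\<exists>B P. similar_mat_wit A B P (mat_adjoint P) \<and> upper_triangular B \<and> diag_mat B = es"
  using assms
proof (induct es arbitrary: n A)
  case Nil
  with degree_monic_char_poly[of A n] have "n = 0" by auto
  with Nil show ?case
    by (intro exI[of _ A] exI[of _ "1\<^sub>m n"])
       (auto intro: similar_mat_wit_refl simp: diag_mat_def upper_triangular_def)
next
  case (Cons e es n A)
  have A: "A \<in> carrier_mat n n" by fact
  have e: "eigenvalue A e"
    unfolding eigenvalue_root_char_poly[OF A] Cons(3) by simp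
  obtain W where W: "W \<in> carrier_mat n n" and W'W: "mat_adjoint W * W = 1\<^sub>m n"
    and WW': "W * mat_adjoint W = 1\<^sub>m n" and n: "n \<noteq> 0"
    and col0: "col (mat_adjoint W * A * W) 0 = vec n (\<lambda>i. if i = 0 then e else 0)"
    using unitary_eigenframe[OF A e] by blast
  define A' where "A' = mat_adjoint W * A * W"
  have A': "A' \<in> carrier_mat n n" unfolding A'_def using W A by auto
  have sim_A'A: "similar_mat_wit A' A (mat_adjoint W) W"
    by (rule similar_mat_witI[of _ _ n]) (use W A A' W'W WW' in \<open>auto simp: A'_def\<close>)
  obtain A2 A3 where A2: "A2 \<in> carrier_mat 1 (n - 1)" and A3: "A3 \<in> carrier_mat (n - 1) (n - 1)"
    and A'_block: "A' = four_block_mat (mat 1 1 (\<lambda>_. e)) A2 (0\<^sub>m (n - 1) 1) A3"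
    using first_column_block[OF A' n col0[folded A'_def]] by blast
  have "char_poly A' = char_poly A"
    using char_poly_similar sim_A'A unfolding similar_mat_def by blast
  then have "[: -e, 1 :] * (\<Prod>e \<leftarrow> es. [:- e, 1:]) = char_poly A'"
    using Cons(3) by simp
  also have "\<dots> = char_poly (mat 1 1 (\<lambda>_. e)) * char_poly A3"
    unfolding A'_block by (rule char_poly_four_block_zeros_col[OF _ A2 A3]) auto
  also have "char_poly (mat 1 1 (\<lambda>_. e)) = [: -e, 1 :]"
    by (simp add: char_poly_defs det_def sign_def)
  finally have "char_poly A3 = (\<Prod>e \<leftarrow> es. [:- e, 1:])"
    by (metis mult_cancel_left pCons_eq_0_iff zero_neq_one)
  from Cons(1)[OF A3 this] obtain B P where sim3: "similar_mat_wit A3 B P (mat_adjoint P)"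
    and ut: "upper_triangular B" and diag: "diag_mat B = es" by auto
  from unitary_triangularize_block[OF A2 A3 sim3 ut, of e] n obtain C Q
    where sim_A'C: "similar_mat_wit A' C Q (mat_adjoint Q)" and Q: "Q \<in> carrier_mat n n"
      and "upper_triangular C" "diag_mat C = e # es"
    unfolding A'_block[symmetric] diag by auto
  moreover have "similar_mat_wit A A' W (mat_adjoint W)"
    using similar_mat_wit_sym[OF sim_A'A] by simp
  moreover have "mat_adjoint (W * Q) = mat_adjoint Q * mat_adjoint W"
    using mat_adjoint_mult[OF W Q] .
  ultimately show ?case using similar_mat_wit_trans[OF _ sim_A'C] by metis
qed

section \<open>The spectral theorem for Hermitian matrices\<close>

lemma self_adjoint_upper_triangular_diagonal:
  fixes B :: "complex mat"
  assumes B: "B \<in> carrier_mat n n" and adj: "mat_adjoint B = B"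
    and ut: "upper_triangular B" and i: "i < n" and j: "j < n"
  shows "B $$ (i,j) = (if i = j then diag_mat B ! i else 0)"
proof (cases "i = j")
  case True then show ?thesis using i B unfolding diag_mat_def by auto
next
  case False
  have "B $$ (i,j) = cnj (B $$ (j,i))"
    using arg_cong[OF adj, of "\<lambda>M. M $$ (i,j)"] i j B by auto
  show ?thesis
  proof (cases "j < i")
    case True then show ?thesis using ut i B False by auto
  next
    case False
    then have "B $$ (j,i) = 0" using ut j B \<open>i \<noteq> j\<close> by auto
    then show ?thesis using \<open>B $$ (i,j) = cnj (B $$ (j,i))\<close> \<open>i \<noteq> j\<close> by simp
  qed
qed

definition orthonormal_cols :: "nat \<Rightarrow> complex mat \<Rightarrow> bool" where
  "orthonormal_cols n U \<longleftrightarrow>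
     (\<forall>p<n. \<forall>q<n. (\<Sum>t<n. cnj (U $$ (t,p)) * U $$ (t,q)) = (if p = q then 1 else 0))"

definition orthonormal_rows :: "nat \<Rightarrow> complex mat \<Rightarrow> bool" where
  "orthonormal_rows n U \<longleftrightarrow>
     (\<forall>t<n. \<forall>s<n. (\<Sum>p<n. U $$ (t,p) * cnj (U $$ (s,p))) = (if t = s then 1 else 0))"

(* A = U diag(a) U^H with U unitary, written entrywise: the spectral decomposition of A with
   eigenvalue list a and eigenvectors the columns of U. *)
definition spectral_decomp :: "nat \<Rightarrow> complex mat \<Rightarrow> complex mat \<Rightarrow> real list \<Rightarrow> bool" where
  "spectral_decomp n A U a \<longleftrightarrow> A \<in> carrier_mat n n \<and> U \<in> carrier_mat n n \<and> length a = n \<and>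
     orthonormal_cols n U \<and> orthonormal_rows n U \<and>
     (\<forall>t<n. \<forall>s<n. A $$ (t,s) = (\<Sum>p<n. U $$ (t,p) * complex_of_real (a ! p) * cnj (U $$ (s,p))))"

lemma unitary_orthonormal:
  fixes P :: "complex mat"
  assumes P: "P \<in> carrier_mat n n" and P'P: "mat_adjoint P * P = 1\<^sub>m n" and PP': "P * mat_adjoint P = 1\<^sub>m n"
  shows "orthonormal_cols n P" and "orthonormal_rows n P"
proof -
  have P': "mat_adjoint P \<in> carrier_mat n n" using P by simp
  show "orthonormal_cols n P"
    unfolding orthonormal_cols_def
    using arg_cong[OF P'P, of "\<lambda>M. M $$ (_,_)"] mult_mat_entry[OF P' P] P by auto
  show "orthonormal_rows n P"
    unfolding orthonormal_rows_def
    using arg_cong[OF PP', of "\<lambda>M. M $$ (_,_)"] mult_mat_entry[OF P P'] P by auto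
qed

(* Spectral theorem: a Hermitian matrix with eigenvalue list a has a spectral decomposition.
   The unitary Schur form of a self-adjoint matrix is self-adjoint, hence diagonal. *)
lemma spectral_decomp_exists:
  assumes herm: "hermitian_mat n A" and eig: "has_eigenvalues A a" and len: "length a = n"
  shows "\<exists>U. spectral_decomp n A U a"
proof -
  have A: "A \<in> carrier_mat n n" using herm unfolding hermitian_mat_def by blast
  have "char_poly A = (\<Prod>e \<leftarrow> map complex_of_real a. [:- e, 1:])"
    using eig unfolding has_eigenvalues_def by (simp add: o_def)
  from unitary_schur[OF A this] obtain B P where sim: "similar_mat_wit A B P (mat_adjoint P)"
    and ut: "upper_triangular B" and diag: "diag_mat B = map complex_of_real a" by auto
  from similar_mat_witD2[OF A sim]
  have PP': "P * mat_adjoint P = 1\<^sub>m n" and P'P: "mat_adjoint P * P = 1\<^sub>m n"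
    and AB: "A = P * B * mat_adjoint P" and B: "B \<in> carrier_mat n n" and P: "P \<in> carrier_mat n n"
    by blast+
  have P': "mat_adjoint P \<in> carrier_mat n n" using P by simp
  have BA: "B = mat_adjoint P * A * P"
    using similar_mat_witD2(3)[OF B similar_mat_wit_sym[OF sim]] .
  have "mat_adjoint B = mat_adjoint P * mat_adjoint A * P"
    unfolding BA using A P P'
    by (simp add: mat_adjoint_mult[of _ n n _ n] assoc_mult_mat[of _ n n _ n _ n])
  then have B_adj: "mat_adjoint B = B" unfolding hermitian_mat_adjoint[OF herm] BA .
  have B_diag: "B $$ (i,j) = (if i = j then complex_of_real (a ! i) else 0)" if "i < n" "j < n" for i j
    using self_adjoint_upper_triangular_diagonal[OF B B_adj ut that] diag len that by simp
  have "orthonormal_cols n P" "orthonormal_rows n P" using unitary_orthonormal[OF P P'P PP'] by auto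
  moreover have "A $$ (t,s) = (\<Sum>p<n. P $$ (t,p) * complex_of_real (a ! p) * cnj (P $$ (s,p)))"
    if t: "t < n" and s: "s < n" for t s
  proof -
    have PB: "(P * B) $$ (t,p) = P $$ (t,p) * complex_of_real (a ! p)" if p: "p < n" for p
    proof -
      have "(\<Sum>l<n. P $$ (t,l) * B $$ (l,p)) = (\<Sum>l<n. if l = p then P $$ (t,p) * complex_of_real (a ! p) else 0)"
        by (rule sum.cong) (auto simp: B_diag p)
      then show ?thesis using p by (simp add: mult_mat_entry[OF P B t p])
    qed
    show ?thesis
      unfolding AB mult_mat_entry[OF mult_carrier_mat[OF P B] P' t s] using P s
      by (intro sum.cong) (simp_all add: PB)
  qed
  ultimately show ?thesis unfolding spectral_decomp_def using A P len by blast
qed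

section \<open>Rayleigh quotients\<close>

definition rayleigh :: "nat \<Rightarrow> complex mat \<Rightarrow> nat \<Rightarrow> complex mat \<Rightarrow> complex" where
  "rayleigh n U p X = (\<Sum>t<n. \<Sum>s<n. cnj (U $$ (t,p)) * X $$ (t,s) * U $$ (s,p))"

lemma sum_rayleigh_trace:
  assumes "orthonormal_rows n U" and X: "X \<in> carrier_mat n n"
  shows "(\<Sum>p<n. rayleigh n U p X) = mtrace X"
proof -
  have "(\<Sum>p<n. rayleigh n U p X) = (\<Sum>t<n. \<Sum>s<n. X $$ (t,s) * (\<Sum>p<n. U $$ (s,p) * cnj (U $$ (t,p))))"
    unfolding rayleigh_def by (subst sum_swap3[symmetric]) (simp add: sum_distrib_left mult_ac)
  also have "\<dots> = (\<Sum>t<n. X $$ (t,t))"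
    using assms(1) unfolding orthonormal_rows_def by (intro sum.cong refl) (simp add: sum_delta_mult)
  finally show ?thesis unfolding mtrace_def using X by simp
qed

lemma rayleigh_eigenvalue:
  assumes sd: "spectral_decomp n A U a" and p: "p < n"
  shows "rayleigh n U p A = complex_of_real (a ! p)"
proof -
  have cols: "\<And>p q. p < n \<Longrightarrow> q < n \<Longrightarrow> (\<Sum>t<n. cnj (U $$ (t,p)) * U $$ (t,q)) = (if p = q then 1 else 0)"
    and A: "\<And>t s. t < n \<Longrightarrow> s < n \<Longrightarrow> A $$ (t,s) = (\<Sum>k<n. U $$ (t,k) * complex_of_real (a ! k) * cnj (U $$ (s,k)))"
    using sd unfolding spectral_decomp_def orthonormal_cols_def by auto
  have "rayleigh n U p A = (\<Sum>t<n. \<Sum>s<n. \<Sum>k<n.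
           complex_of_real (a ! k) * ((cnj (U $$ (t,p)) * U $$ (t,k)) * (cnj (U $$ (s,k)) * U $$ (s,p))))"
    unfolding rayleigh_def by (intro sum.cong refl) (simp add: A sum_distrib_left sum_distrib_right mult_ac)
  also have "\<dots> = (\<Sum>k<n. complex_of_real (a ! k) *
           ((\<Sum>t<n. cnj (U $$ (t,p)) * U $$ (t,k)) * (\<Sum>s<n. cnj (U $$ (s,k)) * U $$ (s,p))))"
    by (subst sum_swap3, rule sum.cong[OF refl], simp only: scaled_sum_product)
  also have "\<dots> = (\<Sum>k<n. if k = p then complex_of_real (a ! k) else 0)"
    by (intro sum.cong refl) (simp add: cols p)
  finally show ?thesis using p by simp
qed

lemma spectral_decomp_trace:
  assumes sd: "spectral_decomp n A U a"
  shows "mtrace A = complex_of_real (sum_list a)"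
proof -
  have "mtrace A = (\<Sum>p<n. rayleigh n U p A)"
    using sd sum_rayleigh_trace unfolding spectral_decomp_def by metis
  also have "\<dots> = (\<Sum>p<n. complex_of_real (a ! p))"
    using rayleigh_eigenvalue[OF sd] by simp
  finally show ?thesis
    using sd unfolding spectral_decomp_def by (simp add: sum_list_as_sum)
qed

section \<open>From completely positive maps to stochastic matrices\<close>

lemma linear_map_zero:
  assumes lin: "linear_map_mat n m \<Phi>"
  shows "\<Phi> (0\<^sub>m n n) = 0\<^sub>m m m"
proof -
  have c: "\<Phi> (0\<^sub>m n n) \<in> carrier_mat m m" using lin unfolding linear_map_mat_def by auto
  have "\<Phi> (0\<^sub>m n n) = \<Phi> (0 \<cdot>\<^sub>m 0\<^sub>m n n)" by (rule arg_cong[of _ _ \<Phi>], rule eq_matI) auto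
  also have "\<dots> = 0 \<cdot>\<^sub>m \<Phi> (0\<^sub>m n n)" using lin zero_carrier_mat[of n n] unfolding linear_map_mat_def by blast
  also have "\<dots> = 0\<^sub>m m m" using c by (intro eq_matI) auto
  finally show ?thesis .
qed

lemma linear_map_sum_entry:
  fixes k :: nat
  assumes lin: "linear_map_mat n m \<Phi>"
    and Y: "\<And>p. p < k \<Longrightarrow> Y p \<in> carrier_mat n n" and r: "r < m" and s: "s < m"
  shows "\<Phi> (mat n n (\<lambda>(t,u). \<Sum>p<k. c p * Y p $$ (t,u))) $$ (r,s) = (\<Sum>p<k. c p * \<Phi> (Y p) $$ (r,s))"
  using Y
proof (induct k)
  case 0
  have zero: "mat n n (\<lambda>(t,u). \<Sum>p<0. c p * Y p $$ (t,u)) = 0\<^sub>m n n" by (rule eq_matI) auto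
  show ?case by (subst zero) (simp add: linear_map_zero[OF lin] r s)
next
  case (Suc k)
  let ?S = "mat n n (\<lambda>(t,u). \<Sum>p<k. c p * Y p $$ (t,u))"
  have Yk: "Y k \<in> carrier_mat n n" using Suc by auto
  have S: "?S \<in> carrier_mat n n" by auto
  have split: "mat n n (\<lambda>(t,u). \<Sum>p<Suc k. c p * Y p $$ (t,u)) = ?S + c k \<cdot>\<^sub>m Y k"
    by (rule eq_matI) (use Yk in auto)
  have "\<Phi> (?S + c k \<cdot>\<^sub>m Y k) = \<Phi> ?S + \<Phi> (c k \<cdot>\<^sub>m Y k)"
    using lin S smult_carrier_mat[OF Yk] unfolding linear_map_mat_def by blast
  also have "\<Phi> (c k \<cdot>\<^sub>m Y k) = c k \<cdot>\<^sub>m \<Phi> (Y k)"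
    using lin Yk unfolding linear_map_mat_def by blast
  finally have additive: "\<Phi> (?S + c k \<cdot>\<^sub>m Y k) = \<Phi> ?S + c k \<cdot>\<^sub>m \<Phi> (Y k)" .
  have "\<Phi> ?S \<in> carrier_mat m m" "\<Phi> (Y k) \<in> carrier_mat m m"
    using lin S Yk unfolding linear_map_mat_def by auto
  then have "\<Phi> (mat n n (\<lambda>(t,u). \<Sum>p<Suc k. c p * Y p $$ (t,u))) $$ (r,s)
      = \<Phi> ?S $$ (r,s) + c k * \<Phi> (Y k) $$ (r,s)"
    unfolding split additive using r s by simp
  also have "\<Phi> ?S $$ (r,s) = (\<Sum>p<k. c p * \<Phi> (Y p) $$ (r,s))"
    by (rule Suc.hyps, rule Suc.prems) simp
  finally show ?case by simp
qed

lemma ampl_one: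
  assumes X: "X \<in> carrier_mat n n" and PX: "\<Phi> X \<in> carrier_mat m m"
  shows "ampl 1 n m \<Phi> X = \<Phi> X"
proof -
  have "mat n n (\<lambda>(r,s). X $$ (0 * n + r, 0 * n + s)) = X" by (rule eq_matI) (use X in auto)
  then show ?thesis by (intro eq_matI) (use PX in \<open>auto simp: ampl_def\<close>)
qed

lemma completely_positive_psd:
  assumes lin: "linear_map_mat n m \<Phi>" and cp: "completely_positive n m \<Phi>"
    and X: "X \<in> carrier_mat n n" and psd: "psd_mat X"
  shows "psd_mat (\<Phi> X)"
proof -
  have "\<Phi> X \<in> carrier_mat m m" using lin X unfolding linear_map_mat_def by blast
  moreover have "psd_mat (ampl 1 n m \<Phi> X)" using cp X psd unfolding completely_positive_def by auto
  ultimately show ?thesis using ampl_one[OF X] by simp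
qed

lemma rank_one_psd: "psd_mat (mat n n (\<lambda>(t,s). u t * cnj (u s)))"
  unfolding psd_mat_def hermitian_mat_def
proof (intro conjI ballI allI impI)
  fix x :: "complex vec"
  define w where "w = (\<Sum>i<n. cnj (x $ i) * u i)"
  have "(\<Sum>i<n. \<Sum>j<n. cnj (x $ i) * mat n n (\<lambda>(t,s). u t * cnj (u s)) $$ (i,j) * x $ j)
      = (\<Sum>i<n. \<Sum>j<n. (cnj (x $ i) * u i) * cnj (cnj (x $ j) * u j))"
    by (auto simp: mult_ac intro!: sum.cong)
  also have "\<dots> = w * cnj w" unfolding w_def cnj_sum sum_product ..
  finally show "0 \<le> Re (\<Sum>i<dim_row (mat n n (\<lambda>(t,s). u t * cnj (u s))).
      \<Sum>j<dim_row (mat n n (\<lambda>(t,s). u t * cnj (u s))). cnj (x $ i) * mat n n (\<lambda>(t,s). u t * cnj (u s)) $$ (i,j) * x $ j)"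
    by (simp add: complex_mult_cnj)
qed auto

lemma psd_rayleigh_nonneg:
  assumes "psd_mat M" and "M \<in> carrier_mat m m"
  shows "0 \<le> Re (rayleigh m V q M)"
proof -
  have quad: "\<forall>x \<in> carrier_vec m. 0 \<le> Re (\<Sum>i<m. \<Sum>j<m. cnj (x $ i) * M $$ (i,j) * x $ j)"
    using assms unfolding psd_mat_def by auto
  have "rayleigh m V q M
      = (\<Sum>i<m. \<Sum>j<m. cnj (vec m (\<lambda>t. V $$ (t,q)) $ i) * M $$ (i,j) * vec m (\<lambda>t. V $$ (t,q)) $ j)"
    unfolding rayleigh_def by simp
  then show ?thesis using bspec[OF quad vec_carrier] by simp
qed

lemma rayleigh_linear_combination:
  assumes "\<And>r s. r < m \<Longrightarrow> s < m \<Longrightarrow> B $$ (r,s) = (\<Sum>p<n. c p * M p $$ (r,s))"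
  shows "rayleigh m V q B = (\<Sum>p<n. c p * rayleigh m V q (M p))"
proof -
  have "rayleigh m V q B = (\<Sum>r<m. \<Sum>s<m. \<Sum>p<n. c p * (cnj (V $$ (r,q)) * M p $$ (r,s) * V $$ (s,q)))"
    unfolding rayleigh_def by (intro sum.cong refl) (simp add: assms sum_distrib_left sum_distrib_right mult_ac)
  then show ?thesis unfolding rayleigh_def by (subst (asm) sum_swap3) (simp add: sum_distrib_left)
qed

definition column_projection :: "nat \<Rightarrow> complex mat \<Rightarrow> nat \<Rightarrow> complex mat" where
  "column_projection n U p = mat n n (\<lambda>(t,s). U $$ (t,p) * cnj (U $$ (s,p)))"

lemma spectral_projection_sum:
  assumes sd: "spectral_decomp n A U a"
  shows "A = mat n n (\<lambda>(t,s). \<Sum>p<n. complex_of_real (a ! p) * column_projection n U p $$ (t,s))"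
  using sd unfolding spectral_decomp_def column_projection_def
  by (intro eq_matI) (auto simp: mult_ac intro!: sum.cong)

lemma unit_trace_psd_row_stochastic:
  assumes V: "orthonormal_rows m V"
    and M: "\<And>p. p < n \<Longrightarrow> M p \<in> carrier_mat m m \<and> psd_mat (M p) \<and> mtrace (M p) = 1"
  shows "row_stochastic n m (mat n m (\<lambda>(p,q). Re (rayleigh m V q (M p))))"
  unfolding row_stochastic_def
proof (intro conjI allI impI)
  fix p assume p: "p < n"
  show "0 \<le> mat n m (\<lambda>(p,q). Re (rayleigh m V q (M p))) $$ (p,q)" if "q < m" for q
    using p that M[OF p] psd_rayleigh_nonneg by simp
  have Mp: "M p \<in> carrier_mat m m" "mtrace (M p) = 1" using M[OF p] by auto
  have "(\<Sum>q<m. Re (rayleigh m V q (M p))) = Re (\<Sum>q<m. rayleigh m V q (M p))" by (simp add: Re_sum)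
  also have "\<dots> = 1" using sum_rayleigh_trace[OF V Mp(1)] Mp(2) by simp
  finally show "(\<Sum>q<m. mat n m (\<lambda>(p,q). Re (rayleigh m V q (M p))) $$ (p,q)) = 1" using p by simp
qed simp

(* By linearity, b_q = v_q^H \<Phi>(A) v_q = \<Sum>p. a_p v_q^H \<Phi>(u_p u_p^H) v_q. *)
lemma channel_mixes_eigenvalues:
  assumes sdA: "spectral_decomp n A U a" and sdB: "spectral_decomp m B V b"
    and lin: "linear_map_mat n m \<Phi>" and PhiA: "\<Phi> A = B" and q: "q < m"
  shows "b ! q = (\<Sum>p<n. a ! p * Re (rayleigh m V q (\<Phi> (column_projection n U p))))"
proof -
  have proj: "column_projection n U p \<in> carrier_mat n n" for p
    unfolding column_projection_def by simp
  have "B $$ (r,s) = (\<Sum>p<n. complex_of_real (a ! p) * \<Phi> (column_projection n U p) $$ (r,s))"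
    if "r < m" "s < m" for r s
    unfolding PhiA[symmetric] using that
    by (subst spectral_projection_sum[OF sdA]) (rule linear_map_sum_entry[OF lin proj])
  then have "rayleigh m V q B = (\<Sum>p<n. complex_of_real (a ! p) * rayleigh m V q (\<Phi> (column_projection n U p)))"
    by (rule rayleigh_linear_combination)
  then have "complex_of_real (b ! q) = (\<Sum>p<n. complex_of_real (a ! p) * rayleigh m V q (\<Phi> (column_projection n U p)))"
    using rayleigh_eigenvalue[OF sdB q] by simp
  then have "b ! q = Re (\<Sum>p<n. complex_of_real (a ! p) * rayleigh m V q (\<Phi> (column_projection n U p)))"
    by (metis Re_complex_of_real)
  then show ?thesis by (simp add: Re_sum)
qed

(* (a) \<Longrightarrow> (b): the matrix D_pq = v_q^H \<Phi>(u_p u_p^H) v_q has probability vectors as rows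
   (\<Phi> is positive and trace preserving), and b = a D. *)
lemma channel_to_stochastic:
  assumes sdA: "spectral_decomp n A U a" and sdB: "spectral_decomp m B V b"
    and lin: "linear_map_mat n m \<Phi>" and cp: "completely_positive n m \<Phi>" and tp: "trace_preserving n \<Phi>"
    and PhiA: "\<Phi> A = B"
  shows "\<exists>D. row_stochastic n m D \<and> vec_mat_eq b a D"
proof -
  have U_cols: "orthonormal_cols n U" and la: "length a = n"
    and V_rows: "orthonormal_rows m V" and lb: "length b = m"
    using sdA sdB unfolding spectral_decomp_def by auto
  define M where "M p = \<Phi> (column_projection n U p)" for p
  have proj: "column_projection n U p \<in> carrier_mat n n" for p
    unfolding column_projection_def by simp
  have M: "M p \<in> carrier_mat m m" for p
    unfolding M_def using lin proj unfolding linear_map_mat_def by auto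
  define D where "D = mat n m (\<lambda>(p,q). Re (rayleigh m V q (M p)))"
  have "psd_mat (M p)" for p
    unfolding M_def column_projection_def
    using completely_positive_psd[OF lin cp _ rank_one_psd[of n "\<lambda>t. U $$ (t,p)"]] by simp
  moreover have "mtrace (M p) = 1" if "p < n" for p
  proof -
    have "mtrace (M p) = mtrace (column_projection n U p)"
      unfolding M_def using tp proj unfolding trace_preserving_def by blast
    also have "\<dots> = 1"
      using U_cols that unfolding mtrace_def column_projection_def orthonormal_cols_def
      by (simp add: mult.commute)
    finally show ?thesis .
  qed
  ultimately have "row_stochastic n m D"
    unfolding D_def using unit_trace_psd_row_stochastic[OF V_rows] M by blast
  moreover have "vec_mat_eq b a D"
    unfolding vec_mat_eq_def D_def M_def using channel_mixes_eigenvalues[OF sdA sdB lin PhiA] la lb by simp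
  ultimately show ?thesis by blast
qed

section \<open>From stochastic matrices to completely positive maps\<close>

(* The channel built from a row stochastic D:
   \<Phi>(X) = \<Sum>p q. D_pq (u_p^H X u_p) v_q v_q^H, with Kraus operators sqrt(D_pq) v_q u_p^H. *)
definition stochastic_channel ::
    "nat \<Rightarrow> nat \<Rightarrow> complex mat \<Rightarrow> complex mat \<Rightarrow> real mat \<Rightarrow> complex mat \<Rightarrow> complex mat" where
  "stochastic_channel n m U V D X = mat m m (\<lambda>(r,s).
     \<Sum>p<n. \<Sum>q<m. complex_of_real (D $$ (p,q)) * rayleigh n U p X * (V $$ (r,q) * cnj (V $$ (s,q))))"

lemma rayleigh_add:
  "X \<in> carrier_mat n n \<Longrightarrow> Y \<in> carrier_mat n n \<Longrightarrow> rayleigh n U p (X + Y) = rayleigh n U p X + rayleigh n U p Y"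
  unfolding rayleigh_def sum.distrib[symmetric] by (intro sum.cong refl) (auto simp: algebra_simps)

lemma rayleigh_smult: "X \<in> carrier_mat n n \<Longrightarrow> rayleigh n U p (c \<cdot>\<^sub>m X) = c * rayleigh n U p X"
  unfolding rayleigh_def by (simp add: sum_distrib_left mult_ac)

lemma stochastic_channel_linear: "linear_map_mat n m (stochastic_channel n m U V D)"
  unfolding linear_map_mat_def
proof (intro conjI ballI allI)
  fix X :: "complex mat"
  show "stochastic_channel n m U V D X \<in> carrier_mat m m" unfolding stochastic_channel_def by simp
next
  fix X Y :: "complex mat" assume X: "X \<in> carrier_mat n n" and Y: "Y \<in> carrier_mat n n"
  show "stochastic_channel n m U V D (X + Y) = stochastic_channel n m U V D X + stochastic_channel n m U V D Y"
  proof (rule eq_matI)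
    fix r s assume "r < dim_row (stochastic_channel n m U V D X + stochastic_channel n m U V D Y)"
      "s < dim_col (stochastic_channel n m U V D X + stochastic_channel n m U V D Y)"
    then have r: "r < m" and s: "s < m" by (auto simp: stochastic_channel_def)
    show "stochastic_channel n m U V D (X + Y) $$ (r,s)
        = (stochastic_channel n m U V D X + stochastic_channel n m U V D Y) $$ (r,s)"
      unfolding stochastic_channel_def using r s
      by (simp add: rayleigh_add[OF X Y] distrib_left distrib_right sum.distrib)
  qed (auto simp: stochastic_channel_def)
next
  fix c and X :: "complex mat" assume X: "X \<in> carrier_mat n n"
  show "stochastic_channel n m U V D (c \<cdot>\<^sub>m X) = c \<cdot>\<^sub>m stochastic_channel n m U V D X"
    by (rule eq_matI) (auto simp: stochastic_channel_def rayleigh_smult[OF X] sum_distrib_left mult_ac)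
qed

(* The channel is trace preserving, since the rows of D sum to 1. *)
lemma stochastic_channel_trace_preserving:
  assumes U: "orthonormal_rows n U" and V: "orthonormal_cols m V" and D: "row_stochastic n m D"
  shows "trace_preserving n (stochastic_channel n m U V D)"
  unfolding trace_preserving_def
proof
  fix X :: "complex mat" assume X: "X \<in> carrier_mat n n"
  have V1: "\<And>q. q < m \<Longrightarrow> (\<Sum>r<m. cnj (V $$ (r,q)) * V $$ (r,q)) = 1"
    using V unfolding orthonormal_cols_def by auto
  have D1: "\<And>p. p < n \<Longrightarrow> (\<Sum>q<m. complex_of_real (D $$ (p,q))) = 1"
    using D unfolding row_stochastic_def by (simp del: of_real_sum add: of_real_sum[symmetric])
  have "mtrace (stochastic_channel n m U V D X) = (\<Sum>r<m. \<Sum>p<n. \<Sum>q<m.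
      complex_of_real (D $$ (p,q)) * rayleigh n U p X * (V $$ (r,q) * cnj (V $$ (r,q))))"
    unfolding mtrace_def stochastic_channel_def by simp
  also have "\<dots> = (\<Sum>p<n. \<Sum>q<m. complex_of_real (D $$ (p,q)) * rayleigh n U p X *
      (\<Sum>r<m. cnj (V $$ (r,q)) * V $$ (r,q)))"
    by (subst sum_swap3[symmetric]) (simp add: sum_distrib_left mult_ac)
  also have "\<dots> = (\<Sum>p<n. \<Sum>q<m. rayleigh n U p X * complex_of_real (D $$ (p,q)))"
    by (intro sum.cong refl) (simp add: V1)
  also have "\<dots> = (\<Sum>p<n. rayleigh n U p X * (\<Sum>q<m. complex_of_real (D $$ (p,q))))"
    by (simp add: sum_distrib_left)
  also have "\<dots> = (\<Sum>p<n. rayleigh n U p X)" by (simp add: D1)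
  also have "\<dots> = mtrace X" by (rule sum_rayleigh_trace[OF U X])
  finally show "mtrace (stochastic_channel n m U V D X) = mtrace X" .
qed

lemma stochastic_channel_maps:
  assumes sdA: "spectral_decomp n A U a" and sdB: "spectral_decomp m B V b" and v: "vec_mat_eq b a D"
  shows "stochastic_channel n m U V D A = B"
proof -
  have B: "B \<in> carrier_mat m m" and lb: "length b = m"
    and VB: "\<And>t s. t < m \<Longrightarrow> s < m \<Longrightarrow> B $$ (t,s) = (\<Sum>q<m. V $$ (t,q) * complex_of_real (b ! q) * cnj (V $$ (s,q)))"
    and la: "length a = n"
    using sdA sdB unfolding spectral_decomp_def by auto
  have bq: "\<And>q. q < m \<Longrightarrow> complex_of_real (b ! q) = (\<Sum>p<n. complex_of_real (a ! p) * complex_of_real (D $$ (p,q)))"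
    using v la lb unfolding vec_mat_eq_def by simp
  show ?thesis
  proof (rule eq_matI)
    fix r s assume "r < dim_row B" "s < dim_col B"
    then have r: "r < m" and s: "s < m" using B by auto
    have "stochastic_channel n m U V D A $$ (r,s) = (\<Sum>p<n. \<Sum>q<m.
        complex_of_real (D $$ (p,q)) * complex_of_real (a ! p) * (V $$ (r,q) * cnj (V $$ (s,q))))"
      unfolding stochastic_channel_def using r s by (simp add: rayleigh_eigenvalue[OF sdA])
    also have "\<dots> = (\<Sum>q<m. (\<Sum>p<n. complex_of_real (a ! p) * complex_of_real (D $$ (p,q))) *
        (V $$ (r,q) * cnj (V $$ (s,q))))"
      by (subst sum.swap) (simp add: sum_distrib_right sum_distrib_left mult_ac)
    also have "\<dots> = B $$ (r,s)" using VB[OF r s] by (simp add: bq mult_ac)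
    finally show "stochastic_channel n m U V D A $$ (r,s) = B $$ (r,s)" .
  qed (use B in \<open>auto simp: stochastic_channel_def\<close>)
qed

definition block_rayleigh :: "nat \<Rightarrow> complex mat \<Rightarrow> complex mat \<Rightarrow> nat \<Rightarrow> nat \<Rightarrow> nat \<Rightarrow> complex" where
  "block_rayleigh n U X p I J = (\<Sum>t<n. \<Sum>s<n. cnj (U $$ (t,p)) * X $$ (I*n + t, J*n + s) * U $$ (s,p))"

lemma ampl_stochastic_channel_entry:
  assumes i: "i < k*m" and j: "j < k*m"
  shows "ampl k n m (stochastic_channel n m U V D) X $$ (i,j) = (\<Sum>p<n. \<Sum>q<m.
     complex_of_real (D $$ (p,q)) * block_rayleigh n U X p (i div m) (j div m) * (V $$ (i mod m, q) * cnj (V $$ (j mod m, q))))"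
proof -
  have "m > 0" using i by (cases m) auto
  then show ?thesis
    unfolding ampl_def stochastic_channel_def rayleigh_def block_rayleigh_def using i j by simp
qed

lemma block_rayleigh_cnj:
  assumes herm: "hermitian_mat (k*n) X" and I: "I < k" and J: "J < k"
  shows "block_rayleigh n U X p J I = cnj (block_rayleigh n U X p I J)"
proof -
  have hX: "\<And>i j. i < k*n \<Longrightarrow> j < k*n \<Longrightarrow> X $$ (j,i) = cnj (X $$ (i,j))"
    using herm unfolding hermitian_mat_def by blast
  have "cnj (block_rayleigh n U X p I J)
      = (\<Sum>t<n. \<Sum>s<n. U $$ (t,p) * cnj (X $$ (I*n + t, J*n + s)) * cnj (U $$ (s,p)))"
    unfolding block_rayleigh_def by (simp add: cnj_sum)
  also have "\<dots> = (\<Sum>t<n. \<Sum>s<n. cnj (U $$ (s,p)) * X $$ (J*n + s, I*n + t) * U $$ (t,p))"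
    by (intro sum.cong refl)
       (simp add: hX[OF block_index_less[OF I] block_index_less[OF J]] mult_ac)
  also have "\<dots> = block_rayleigh n U X p J I" unfolding block_rayleigh_def by (rule sum.swap)
  finally show ?thesis by simp
qed

lemma ampl_stochastic_channel_hermitian:
  assumes herm: "hermitian_mat (k*n) X"
  shows "hermitian_mat (k*m) (ampl k n m (stochastic_channel n m U V D) X)"
  unfolding hermitian_mat_def
proof (intro conjI allI impI)
  show "ampl k n m (stochastic_channel n m U V D) X \<in> carrier_mat (k*m) (k*m)" unfolding ampl_def by auto
  have blk: "\<And>i. i < k*m \<Longrightarrow> i div m < k" by (rule less_mult_imp_div_less)
  fix i j assume i: "i < k*m" and j: "j < k*m"
  show "ampl k n m (stochastic_channel n m U V D) X $$ (j,i) = cnj (ampl k n m (stochastic_channel n m U V D) X $$ (i,j))"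
    unfolding ampl_stochastic_channel_entry[OF i j] ampl_stochastic_channel_entry[OF j i]
    by (simp add: cnj_sum block_rayleigh_cnj[OF herm blk[OF i] blk[OF j]] mult_ac)
qed

(* Each (p,q)-summand of the quadratic form z^H (I_k \<otimes> \<Phi>)(X) z is the quadratic form
   y^H X y at the vector y = (I_k \<otimes> u_p v_q^H) z. *)
lemma block_quadratic_form:
  fixes z :: "complex vec" and U V X :: "complex mat" and p q k n m :: nat
  assumes n: "n > 0" and m: "m > 0"
  defines "y \<equiv> vec (k*n) (\<lambda>l. U $$ (l mod n, p) * (\<Sum>s<m. cnj (V $$ (s,q)) * z $ ((l div n)*m + s)))"
  shows "(\<Sum>i<k*m. \<Sum>j<k*m. cnj (z $ i) * block_rayleigh n U X p (i div m) (j div m) *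
            (V $$ (i mod m, q) * cnj (V $$ (j mod m, q))) * z $ j)
       = (\<Sum>l<k*n. \<Sum>l'<k*n. cnj (y $ l) * X $$ (l,l') * y $ l')"
proof -
  define H where "H I J = (\<Sum>r<m. \<Sum>s<m. \<Sum>t<n. \<Sum>t'<n. cnj (z $ (I*m + r)) * V $$ (r,q) * cnj (U $$ (t,p)) *
      X $$ (I*n + t, J*n + t') * U $$ (t',p) * cnj (V $$ (s,q)) * z $ (J*m + s))" for I J
  have dm: "\<And>I r. r < m \<Longrightarrow> (I*m + r) div m = I \<and> (I*m + r) mod m = r" using m by simp
  have dn: "\<And>I r. r < n \<Longrightarrow> (I*n + r) div n = I \<and> (I*n + r) mod n = r" using n by simp
  have "(\<Sum>i<k*m. \<Sum>j<k*m. cnj (z $ i) * block_rayleigh n U X p (i div m) (j div m) *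
           (V $$ (i mod m, q) * cnj (V $$ (j mod m, q))) * z $ j)
      = (\<Sum>I<k. \<Sum>r<m. \<Sum>J<k. \<Sum>s<m. cnj (z $ (I*m + r)) * block_rayleigh n U X p I J *
           (V $$ (r,q) * cnj (V $$ (s,q))) * z $ (J*m + s))"
    unfolding sum_blocks[of _ k m] by (intro sum.cong refl) (simp add: dm)
  also have "\<dots> = (\<Sum>I<k. \<Sum>J<k. \<Sum>r<m. \<Sum>s<m. cnj (z $ (I*m + r)) * block_rayleigh n U X p I J *
           (V $$ (r,q) * cnj (V $$ (s,q))) * z $ (J*m + s))"
    by (rule sum.cong[OF refl], rule sum.swap)
  also have "\<dots> = (\<Sum>I<k. \<Sum>J<k. H I J)"
    unfolding H_def block_rayleigh_def
    by (intro sum.cong refl) (simp add: sum_distrib_left sum_distrib_right mult_ac)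
  finally have lhs: "(\<Sum>i<k*m. \<Sum>j<k*m. cnj (z $ i) * block_rayleigh n U X p (i div m) (j div m) *
      (V $$ (i mod m, q) * cnj (V $$ (j mod m, q))) * z $ j) = (\<Sum>I<k. \<Sum>J<k. H I J)" .
  have y: "\<And>I t. I < k \<Longrightarrow> t < n \<Longrightarrow> y $ (I*n + t) = U $$ (t,p) * (\<Sum>s<m. cnj (V $$ (s,q)) * z $ (I*m + s))"
    unfolding y_def using dn by (simp add: block_index_less)
  have "(\<Sum>l<k*n. \<Sum>l'<k*n. cnj (y $ l) * X $$ (l,l') * y $ l')
      = (\<Sum>I<k. \<Sum>t<n. \<Sum>J<k. \<Sum>t'<n. cnj (y $ (I*n + t)) * X $$ (I*n + t, J*n + t') * y $ (J*n + t'))"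
    unfolding sum_blocks[of _ k n] by simp
  also have "\<dots> = (\<Sum>I<k. \<Sum>J<k. \<Sum>t<n. \<Sum>t'<n. cnj (y $ (I*n + t)) * X $$ (I*n + t, J*n + t') * y $ (J*n + t'))"
    by (rule sum.cong[OF refl], rule sum.swap)
  also have "\<dots> = (\<Sum>I<k. \<Sum>J<k. \<Sum>t<n. \<Sum>t'<n. \<Sum>r<m. \<Sum>s<m. cnj (z $ (I*m + r)) * V $$ (r,q) *
      cnj (U $$ (t,p)) * X $$ (I*n + t, J*n + t') * U $$ (t',p) * cnj (V $$ (s,q)) * z $ (J*m + s))"
    by (intro sum.cong refl) (simp add: y cnj_sum sum_distrib_left sum_distrib_right mult_ac)
  also have "\<dots> = (\<Sum>I<k. \<Sum>J<k. H I J)"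
    unfolding H_def by (rule sum.cong[OF refl], rule sum.cong[OF refl], rule sum_swap4)
  finally show ?thesis using lhs by simp
qed

(* The channel is completely positive: z^H (I_k \<otimes> \<Phi>)(X) z is a nonnegative combination of
   quadratic forms of X. *)
lemma stochastic_channel_cp:
  assumes n: "n > 0" and m: "m > 0" and D: "row_stochastic n m D"
  shows "completely_positive n m (stochastic_channel n m U V D)"
  unfolding completely_positive_def
proof (intro allI ballI impI)
  fix k and X :: "complex mat" assume X: "X \<in> carrier_mat (k*n) (k*n)" and psd: "psd_mat X"
  let ?G = "ampl k n m (stochastic_channel n m U V D) X"
  have herm: "hermitian_mat (k*n) X"
    and quad: "\<And>y. y \<in> carrier_vec (k*n) \<Longrightarrow> 0 \<le> Re (\<Sum>i<k*n. \<Sum>j<k*n. cnj (y $ i) * X $$ (i,j) * y $ j)"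
    using psd X unfolding psd_mat_def by auto
  have D0: "\<And>p q. p < n \<Longrightarrow> q < m \<Longrightarrow> 0 \<le> D $$ (p,q)" using D unfolding row_stochastic_def by auto
  have G: "?G \<in> carrier_mat (k*m) (k*m)" unfolding ampl_def by auto
  have "hermitian_mat (k*m) ?G" by (rule ampl_stochastic_channel_hermitian[OF herm])
  moreover have "0 \<le> Re (\<Sum>i<k*m. \<Sum>j<k*m. cnj (z $ i) * ?G $$ (i,j) * z $ j)" for z :: "complex vec"
  proof -
    define Q where "Q p q = (\<Sum>i<k*m. \<Sum>j<k*m. cnj (z $ i) * block_rayleigh n U X p (i div m) (j div m) *
        (V $$ (i mod m, q) * cnj (V $$ (j mod m, q))) * z $ j)" for p q
    have "(\<Sum>i<k*m. \<Sum>j<k*m. cnj (z $ i) * ?G $$ (i,j) * z $ j)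
        = (\<Sum>i<k*m. \<Sum>j<k*m. \<Sum>p<n. \<Sum>q<m. complex_of_real (D $$ (p,q)) *
            (cnj (z $ i) * block_rayleigh n U X p (i div m) (j div m) * (V $$ (i mod m, q) * cnj (V $$ (j mod m, q))) * z $ j))"
      by (intro sum.cong refl)
         (simp add: ampl_stochastic_channel_entry sum_distrib_left sum_distrib_right mult_ac)
    also have "\<dots> = (\<Sum>p<n. \<Sum>q<m. complex_of_real (D $$ (p,q)) * Q p q)"
      unfolding Q_def by (subst sum_swap4) (simp add: sum_distrib_left)
    finally have expand: "(\<Sum>i<k*m. \<Sum>j<k*m. cnj (z $ i) * ?G $$ (i,j) * z $ j)
        = (\<Sum>p<n. \<Sum>q<m. complex_of_real (D $$ (p,q)) * Q p q)" .
    have "0 \<le> Re (Q p q)" for p q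
      unfolding Q_def block_quadratic_form[OF n m] by (rule quad) simp
    then show ?thesis
      unfolding expand by (simp add: Re_sum) (intro sum_nonneg mult_nonneg_nonneg, auto simp: D0)
  qed
  ultimately show "psd_mat ?G" unfolding psd_mat_def using G by simp
qed

lemma channel_iff_stochastic:
  assumes n: "n \<ge> 1" and m: "m \<ge> 1"
    and sdA: "spectral_decomp n A U a" and sdB: "spectral_decomp m B V b"
  shows "(\<exists>\<Phi>. linear_map_mat n m \<Phi> \<and> completely_positive n m \<Phi> \<and> trace_preserving n \<Phi> \<and> \<Phi> A = B)
     \<longleftrightarrow> (\<exists>D. row_stochastic n m D \<and> vec_mat_eq b a D)"
proof
  assume "\<exists>\<Phi>. linear_map_mat n m \<Phi> \<and> completely_positive n m \<Phi> \<and> trace_preserving n \<Phi> \<and> \<Phi> A = B"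
  then show "\<exists>D. row_stochastic n m D \<and> vec_mat_eq b a D"
    using channel_to_stochastic[OF sdA sdB] by blast
next
  assume "\<exists>D. row_stochastic n m D \<and> vec_mat_eq b a D"
  then obtain D where D: "row_stochastic n m D" and v: "vec_mat_eq b a D" by blast
  have "orthonormal_rows n U" "orthonormal_cols m V"
    using sdA sdB unfolding spectral_decomp_def by auto
  then have "trace_preserving n (stochastic_channel n m U V D)"
    using D by (rule stochastic_channel_trace_preserving)
  moreover have "completely_positive n m (stochastic_channel n m U V D)"
    using n m D by (intro stochastic_channel_cp) auto
  ultimately show "\<exists>\<Phi>. linear_map_mat n m \<Phi> \<and> completely_positive n m \<Phi> \<and> trace_preserving n \<Phi> \<and> \<Phi> A = B"
    using stochastic_channel_linear stochastic_channel_maps[OF sdA sdB v] by blast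
qed

section \<open>Stochastic matrices and the eigenvalue sums\<close>

lemma sum_list_pos_neg_parts:
  fixes xs :: "real list"
  shows "sum_list xs = (\<Sum>p<length xs. max (xs ! p) 0) - (\<Sum>p<length xs. max (- (xs ! p)) 0)"
    and "sum_list (map abs xs) = (\<Sum>p<length xs. max (xs ! p) 0) + (\<Sum>p<length xs. max (- (xs ! p)) 0)"
proof -
  have "sum_list xs = (\<Sum>p<length xs. max (xs ! p) 0 - max (- (xs ! p)) 0)"
    unfolding sum_list_as_sum by (intro sum.cong) auto
  then show "sum_list xs = (\<Sum>p<length xs. max (xs ! p) 0) - (\<Sum>p<length xs. max (- (xs ! p)) 0)"
    by (simp add: sum_subtractf)
  have "sum_list (map abs xs) = (\<Sum>p<length xs. max (xs ! p) 0 + max (- (xs ! p)) 0)"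
    unfolding sum_list_as_sum by (intro sum.cong) auto
  then show "sum_list (map abs xs) = (\<Sum>p<length xs. max (xs ! p) 0) + (\<Sum>p<length xs. max (- (xs ! p)) 0)"
    by (simp add: sum.distrib)
qed

lemma stochastic_preserves_sums:
  assumes D: "row_stochastic n m D" and v: "vec_mat_eq b a D" and la: "length a = n" and lb: "length b = m"
  shows "sum_list b = sum_list a" and "sum_list (map abs b) \<le> sum_list (map abs a)"
proof -
  have D0: "\<And>p q. p < n \<Longrightarrow> q < m \<Longrightarrow> 0 \<le> D $$ (p,q)"
    and D1: "\<And>p. p < n \<Longrightarrow> (\<Sum>q<m. D $$ (p,q)) = 1"
    using D unfolding row_stochastic_def by auto
  have bq: "\<And>q. q < m \<Longrightarrow> b ! q = (\<Sum>p<n. a ! p * D $$ (p,q))"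
    using v la lb unfolding vec_mat_eq_def by auto
  have "sum_list b = (\<Sum>q<m. \<Sum>p<n. a ! p * D $$ (p,q))"
    unfolding sum_list_as_sum lb using bq by simp
  also have "\<dots> = (\<Sum>p<n. a ! p * (\<Sum>q<m. D $$ (p,q)))"
    by (simp add: sum.swap[of _ "{..<m}"] sum_distrib_left)
  also have "\<dots> = sum_list a" unfolding sum_list_as_sum la by (simp add: D1)
  finally show "sum_list b = sum_list a" .
  have "sum_list (map abs b) = (\<Sum>q<m. \<bar>\<Sum>p<n. a ! p * D $$ (p,q)\<bar>)"
    unfolding sum_list_as_sum(2) lb using bq by simp
  also have "\<dots> \<le> (\<Sum>q<m. \<Sum>p<n. \<bar>a ! p\<bar> * D $$ (p,q))"
    by (intro sum_mono order.trans[OF sum_abs]) (auto simp: abs_mult D0)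
  also have "\<dots> = (\<Sum>p<n. \<bar>a ! p\<bar> * (\<Sum>q<m. D $$ (p,q)))"
    by (simp add: sum.swap[of _ "{..<m}"] sum_distrib_left)
  also have "\<dots> = sum_list (map abs a)" unfolding sum_list_as_sum(2) la by (simp add: D1)
  finally show "sum_list (map abs b) \<le> sum_list (map abs a)" .
qed

(* Given a nonnegative vector \<beta> of total mass at most s, there is a probability vector x with
   s x = \<beta> + (excess mass) e_0.  Used for the positive and the negative parts of b. *)
lemma distribution_with_excess:
  fixes \<beta> :: "nat \<Rightarrow> real"
  assumes m: "m \<ge> 1" and nonneg: "\<And>q. q < m \<Longrightarrow> 0 \<le> \<beta> q" and le: "(\<Sum>q<m. \<beta> q) \<le> s"
  shows "\<exists>x. (\<forall>q<m. 0 \<le> x q) \<and> (\<Sum>q<m. x q) = 1 \<and>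
           (\<forall>q<m. s * x q = \<beta> q + (s - (\<Sum>q<m. \<beta> q)) * (if q = 0 then 1 else 0))"
proof -
  define \<delta> :: "nat \<Rightarrow> real" where "\<delta> q = (if q = 0 then 1 else 0)" for q
  have \<delta>: "(\<Sum>q<m. \<delta> q) = 1" unfolding \<delta>_def using m by (simp add: sum.delta)
  have sum\<beta>: "0 \<le> (\<Sum>q<m. \<beta> q)" by (intro sum_nonneg) (use nonneg in auto)
  show ?thesis
  proof (cases "s = 0")
    case True
    then have "\<beta> q = 0" if "q < m" for q
      using sum_nonneg_eq_0_iff[of "{..<m}" \<beta>] nonneg le sum\<beta> that by auto
    with True \<delta> show ?thesis by (intro exI[of _ \<delta>]) (auto simp: \<delta>_def)
  next
    case False
    then have s: "s > 0" using le sum\<beta> by linarith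
    define x where "x q = (\<beta> q + (s - (\<Sum>q<m. \<beta> q)) * \<delta> q) / s" for q
    have "(\<Sum>q<m. x q) = ((\<Sum>q<m. \<beta> q) + (s - (\<Sum>q<m. \<beta> q)) * (\<Sum>q<m. \<delta> q)) / s"
      unfolding x_def by (simp add: sum_divide_distrib[symmetric] sum.distrib sum_distrib_left)
    then have "(\<Sum>q<m. x q) = 1" using s \<delta> by simp
    moreover have "0 \<le> x q" if "q < m" for q
      unfolding x_def \<delta>_def using s le nonneg[OF that] by simp
    moreover have "s * x q = \<beta> q + (s - (\<Sum>q<m. \<beta> q)) * (if q = 0 then 1 else 0)" for q
      unfolding x_def \<delta>_def using s by simp
    ultimately show ?thesis by blast
  qed
qed

lemma sign_pattern_stochastic:
  fixes x y z :: "nat \<Rightarrow> real" and a :: "real list" and n m :: nat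
  assumes x: "\<forall>q<m. 0 \<le> x q" "(\<Sum>q<m. x q) = 1"
    and y: "\<forall>q<m. 0 \<le> y q" "(\<Sum>q<m. y q) = 1"
    and z: "\<forall>q<m. 0 \<le> z q" "(\<Sum>q<m. z q) = 1"
  defines "D \<equiv> mat n m (\<lambda>(p,q). if a ! p > 0 then x q else if a ! p < 0 then y q else z q)"
  shows "row_stochastic n m D"
    and "\<And>q. q < m \<Longrightarrow> (\<Sum>p<n. a ! p * D $$ (p,q))
           = (\<Sum>p<n. max (a ! p) 0) * x q - (\<Sum>p<n. max (- (a ! p)) 0) * y q"
    and "\<forall>p<n. \<forall>p'<n. a ! p * a ! p' > 0 \<longrightarrow> row D p = row D p'"
proof -
  show "row_stochastic n m D" unfolding row_stochastic_def
  proof (intro conjI allI impI)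
    show "D \<in> carrier_mat n m" unfolding D_def by simp
    fix p assume p: "p < n"
    show "(\<Sum>q<m. D $$ (p,q)) = 1"
      using x y z p unfolding D_def by (cases "a ! p > 0"; cases "a ! p < 0") simp_all
    show "0 \<le> D $$ (p,q)" if "q < m" for q using p that x y z unfolding D_def by simp
  qed
  show "(\<Sum>p<n. a ! p * D $$ (p,q))
      = (\<Sum>p<n. max (a ! p) 0) * x q - (\<Sum>p<n. max (- (a ! p)) 0) * y q" if q: "q < m" for q
  proof -
    have "(\<Sum>p<n. a ! p * D $$ (p,q)) = (\<Sum>p<n. max (a ! p) 0 * x q - max (- (a ! p)) 0 * y q)"
      unfolding D_def using q by (intro sum.cong) auto
    then show ?thesis unfolding sum_subtractf sum_distrib_right .
  qed
  show "\<forall>p<n. \<forall>p'<n. a ! p * a ! p' > 0 \<longrightarrow> row D p = row D p'"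
  proof (intro allI impI)
    fix p p' assume "p < n" "p' < n" "a ! p * a ! p' > 0"
    moreover have "(a ! p > 0 \<and> a ! p' > 0) \<or> (a ! p < 0 \<and> a ! p' < 0)"
      using \<open>a ! p * a ! p' > 0\<close> by (auto simp: zero_less_mult_iff)
    ultimately show "row D p = row D p'" unfolding D_def by (intro eq_vecI) auto
  qed
qed

(* (c) \<Longrightarrow> (b), with equal rows for eigenvalues of equal sign.  Both the positive and
   the negative part of a carry the same excess mass over the corresponding part of b. *)
lemma stochastic_from_sums:
  assumes la: "length a = n" and lb: "length b = m" and m: "m \<ge> 1"
    and sums: "sum_list a = sum_list b" and abs: "sum_list (map abs b) \<le> sum_list (map abs a)"
  shows "\<exists>D. row_stochastic n m D \<and> vec_mat_eq b a D \<and> (\<forall>p<n. \<forall>q<n. a ! p * a ! q > 0 \<longrightarrow> row D p = row D q)"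
proof -
  define ap where "ap = (\<Sum>p<n. max (a ! p) 0)"
  define an where "an = (\<Sum>p<n. max (- (a ! p)) 0)"
  define bp where "bp = (\<Sum>q<m. max (b ! q) 0)"
  define bn where "bn = (\<Sum>q<m. max (- (b ! q)) 0)"
  have "ap - an = bp - bn" "bp + bn \<le> ap + an"
    using sums abs sum_list_pos_neg_parts[of a] sum_list_pos_neg_parts[of b]
    unfolding ap_def an_def bp_def bn_def la lb by auto
  then have bp: "bp \<le> ap" and bn: "bn \<le> an" and excess: "an - bn = ap - bp" by auto
  define \<delta> :: "nat \<Rightarrow> real" where "\<delta> q = (if q = 0 then 1 else 0)" for q
  have \<delta>: "\<forall>q<m. 0 \<le> \<delta> q" "(\<Sum>q<m. \<delta> q) = 1" unfolding \<delta>_def using m by (simp_all add: sum.delta)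
  obtain x where x: "\<forall>q<m. 0 \<le> x q" "(\<Sum>q<m. x q) = 1"
    and ap_x: "\<forall>q<m. ap * x q = max (b ! q) 0 + (ap - bp) * \<delta> q"
    using distribution_with_excess[OF m, of "\<lambda>q. max (b ! q) 0" ap] bp unfolding bp_def \<delta>_def by auto
  obtain y where y: "\<forall>q<m. 0 \<le> y q" "(\<Sum>q<m. y q) = 1"
    and an_y: "\<forall>q<m. an * y q = max (- (b ! q)) 0 + (an - bn) * \<delta> q"
    using distribution_with_excess[OF m, of "\<lambda>q. max (- (b ! q)) 0" an] bn unfolding bn_def \<delta>_def by auto
  define D where "D = mat n m (\<lambda>(p,q). if a ! p > 0 then x q else if a ! p < 0 then y q else \<delta> q)"
  note D = sign_pattern_stochastic[OF x y \<delta>, where n = n and a = a, folded D_def ap_def an_def]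
  have "vec_mat_eq b a D" unfolding vec_mat_eq_def
  proof (intro allI impI)
    fix q assume "q < length b"
    then have q: "q < m" using lb by simp
    then have "b ! q = ap * x q - an * y q" using ap_x an_y excess by auto
    then show "b ! q = (\<Sum>p<length a. a ! p * D $$ (p,q))" using D(2)[OF q] la by simp
  qed
  then show ?thesis using D(1,3) by blast
qed

lemma vec_mat_eq_replace_zero_row:
  assumes v: "vec_mat_eq b a D" and la: "length a = n" and lb: "length b = m" and p: "a ! p = 0"
  shows "vec_mat_eq b a (mat n m (\<lambda>(i,j). if i = p then r $ j else D $$ (i,j)))"
  unfolding vec_mat_eq_def
proof (intro allI impI)
  fix q assume q: "q < length b"
  have "b ! q = (\<Sum>i<n. a ! i * D $$ (i,q))" using v q la unfolding vec_mat_eq_def by auto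
  also have "\<dots> = (\<Sum>i<n. a ! i * mat n m (\<lambda>(i,j). if i = p then r $ j else D $$ (i,j)) $$ (i,q))"
    using q p lb by (intro sum.cong) auto
  finally show "b ! q = (\<Sum>i<length a. a ! i * mat n m (\<lambda>(i,j). if i = p then r $ j else D $$ (i,j)) $$ (i,q))"
    unfolding la .
qed

lemma stochastic_iff_sums:
  assumes la: "length a = n" and lb: "length b = m" and m: "m \<ge> 1"
  shows "(\<exists>D. row_stochastic n m D \<and> vec_mat_eq b a D)
     \<longleftrightarrow> sum_list a = sum_list b \<and> sum_list (map abs a) \<ge> sum_list (map abs b)"
proof
  assume "\<exists>D. row_stochastic n m D \<and> vec_mat_eq b a D"
  then show "sum_list a = sum_list b \<and> sum_list (map abs a) \<ge> sum_list (map abs b)"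
    using stochastic_preserves_sums[OF _ _ la lb] by (metis (no_types))
next
  assume "sum_list a = sum_list b \<and> sum_list (map abs a) \<ge> sum_list (map abs b)"
  then show "\<exists>D. row_stochastic n m D \<and> vec_mat_eq b a D"
    using stochastic_from_sums[OF la lb m] by blast
qed

lemma stochastic_normal_form:
  assumes la: "length a = n" and lb: "length b = m" and m: "m \<ge> 1"
    and "\<exists>D. row_stochastic n m D \<and> vec_mat_eq b a D"
  shows "\<exists>D. row_stochastic n m D \<and> vec_mat_eq b a D
      \<and> (\<forall>p<n. \<forall>q<n. a ! p * a ! q > 0 \<longrightarrow> row D p = row D q)
      \<and> (\<forall>p<n. a ! p = 0 \<longrightarrow> (\<forall>r \<in> carrier_vec m. (\<forall>j<m. 0 \<le> r $ j) \<and> (\<Sum>j<m. r $ j) = 1 \<longrightarrow>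
             vec_mat_eq b a (mat n m (\<lambda>(i,j). if i = p then r $ j else D $$ (i,j)))))"
proof -
  have "sum_list a = sum_list b \<and> sum_list (map abs a) \<ge> sum_list (map abs b)"
    using assms(4) stochastic_iff_sums[OF la lb m] by blast
  then obtain D where "row_stochastic n m D" "vec_mat_eq b a D"
    "\<forall>p<n. \<forall>q<n. a ! p * a ! q > 0 \<longrightarrow> row D p = row D q"
    using stochastic_from_sums[OF la lb m] by blast
  then show ?thesis using vec_mat_eq_replace_zero_row[OF _ la lb] by blast
qed

lemma sum_list_abs_positive_part:
  "sum_list (map abs xs) = 2 * sum_list (filter (\<lambda>x. x > 0) xs) - sum_list (xs :: real list)"
  by (induct xs) auto

lemma sum_list_negative_part:
  "sum_list (filter (\<lambda>x. x < 0) xs) = sum_list xs - sum_list (filter (\<lambda>x. x > 0) (xs :: real list))"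
  by (induct xs) auto

theorem theorem3p3:
  fixes n m :: nat and A B :: "complex mat" and a b :: "real list"
  assumes "n \<ge> 1" and "m \<ge> 1"
    and "hermitian_mat n A" and "hermitian_mat m B"
    and "length a = n" and "length b = m"
    and "has_eigenvalues A a" and "has_eigenvalues B b"
  shows
    "((\<exists>\<Phi>. linear_map_mat n m \<Phi> \<and> completely_positive n m \<Phi> \<and> trace_preserving n \<Phi> \<and> \<Phi> A = B)
        \<longleftrightarrow> (\<exists>D. row_stochastic n m D \<and> vec_mat_eq b a D))
   \<and> ((\<exists>D. row_stochastic n m D \<and> vec_mat_eq b a D)
        \<longleftrightarrow> (mtrace A = mtrace B \<and> sum_list (map abs a) \<ge> sum_list (map abs b)))
   \<and> ((\<exists>D. row_stochastic n m D \<and> vec_mat_eq b a D) \<longrightarrow>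
        (\<exists>D. row_stochastic n m D \<and> vec_mat_eq b a D
           \<and> (\<forall>p<n. \<forall>q<n. a ! p * a ! q > 0 \<longrightarrow> row D p = row D q)
           \<and> (\<forall>p<n. a ! p = 0 \<longrightarrow>
                (\<forall>r \<in> carrier_vec m. (\<forall>j<m. 0 \<le> r $ j) \<and> (\<Sum>j<m. r $ j) = 1 \<longrightarrow>
                   vec_mat_eq b a (mat n m (\<lambda>(i,j). if i = p then r $ j else D $$ (i,j)))))))
   \<and> ((mtrace A = mtrace B \<and> sum_list (map abs a) \<ge> sum_list (map abs b))
        \<longleftrightarrow> (mtrace A = mtrace B \<and>
             sum_list (filter (\<lambda>x. x > 0) a) \<ge> sum_list (filter (\<lambda>x. x > 0) b)))
   \<and> ((mtrace A = mtrace B \<and> sum_list (map abs a) \<ge> sum_list (map abs b))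
        \<longleftrightarrow> (mtrace A = mtrace B \<and>
             sum_list (filter (\<lambda>x. x < 0) a) \<le> sum_list (filter (\<lambda>x. x < 0) b)))"
proof -
  note n = assms(1) and m = assms(2) and la = assms(5) and lb = assms(6)
  obtain U where sdA: "spectral_decomp n A U a" using spectral_decomp_exists[OF assms(3,7) la] by blast
  obtain V where sdB: "spectral_decomp m B V b" using spectral_decomp_exists[OF assms(4,8) lb] by blast
  have trace: "mtrace A = mtrace B \<longleftrightarrow> sum_list a = sum_list b"
    unfolding spectral_decomp_trace[OF sdA] spectral_decomp_trace[OF sdB] by simp
  show ?thesis
  proof (intro conjI)
    show "(\<exists>\<Phi>. linear_map_mat n m \<Phi> \<and> completely_positive n m \<Phi> \<and> trace_preserving n \<Phi> \<and> \<Phi> A = B)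
        \<longleftrightarrow> (\<exists>D. row_stochastic n m D \<and> vec_mat_eq b a D)"
      by (rule channel_iff_stochastic[OF n m sdA sdB])
    show "(\<exists>D. row_stochastic n m D \<and> vec_mat_eq b a D)
        \<longleftrightarrow> (mtrace A = mtrace B \<and> sum_list (map abs a) \<ge> sum_list (map abs b))"
      unfolding trace by (rule stochastic_iff_sums[OF la lb m])
  qed (use stochastic_normal_form[OF la lb m] in blast,
       unfold sum_list_abs_positive_part[of a] sum_list_abs_positive_part[of b]
         sum_list_negative_part[of a] sum_list_negative_part[of b] trace, auto)
qed

end
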